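(* Let $G=(V,E)$ be a doubly stochasticable strongly connected digraph. Then $\max\{\max_{v\in V}d_{\mathrm{out}}(v),\max_{v\in V}d_{\mathrm{in}}(v)\}\leq\operatorname{ds}(G)\leq|E|-|V|+1.$
   Context: A digraph $G=(V,E)$, $V=\{v_1,\dots,v_n\}$, $E\subseteq V\times V$ (self-loops allowed); $d_{\mathrm{out}}(v)$ and $d_{\mathrm{in}}(v)$ are the numbers of out-neighbors and in-neighbors of $v$. Strongly connected means a directed path exists between every ordered pair of distinct vertices. $G$ is doubly stochasticable if it admits $A\in\mathbb{R}^{n\times n}_{\geq0}$ with $a_{ij}>0$ iff $(v_i,v_j)\in E$ and all row and column sums equal $1$. A cycle is a directed path $v_{i_1},\dots,v_{i_k},v_{i_1}$ with distinct $v_{i_1},\dots,v_{i_k}$ (self-loops are cycles), viewed as a subdigraph; $\mathcal{C}(G)$ is the set of subdigraphs that are a single edgeless vertex, a cycle, or a union of pairwise vertex-disjoint cycles; a family generates $G$ if the union of vertex sets is $V$ and of edge sets is $E$. The DS-character $\operatorname{ds}(G)$ is the minimum cardinality of a subset of $\mathcal{C}(G)$ generating $G$ all of whose elements contain every vertex of $G$. *)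

theory Defs
  imports Complex_Main
begin

text \<open>Subdigraphs are pairs (W, F) of a vertex set and an edge set.\<close>

definition digraph :: "'a set \<Rightarrow> ('a \<times> 'a) set \<Rightarrow> bool" where
  "digraph V E \<longleftrightarrow> finite V \<and> E \<subseteq> V \<times> V"

definition d_out :: "'a set \<Rightarrow> ('a \<times> 'a) set \<Rightarrow> 'a \<Rightarrow> nat" where
  "d_out V E v = card {w \<in> V. (v, w) \<in> E}"

definition d_in :: "'a set \<Rightarrow> ('a \<times> 'a) set \<Rightarrow> 'a \<Rightarrow> nat" where
  "d_in V E v = card {w \<in> V. (w, v) \<in> E}"

definition strongly_connected :: "'a set \<Rightarrow> ('a \<times> 'a) set \<Rightarrow> bool" where
  "strongly_connected V E \<longleftrightarrow> (\<forall>u\<in>V. \<forall>v\<in>V. u \<noteq> v \<longrightarrow> (u, v) \<in> E\<^sup>+)"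

definition doubly_stochasticable :: "'a set \<Rightarrow> ('a \<times> 'a) set \<Rightarrow> bool" where
  "doubly_stochasticable V E \<longleftrightarrow>
     (\<exists>A :: 'a \<Rightarrow> 'a \<Rightarrow> real.
        (\<forall>u\<in>V. \<forall>v\<in>V. A u v \<ge> 0 \<and> (A u v > 0 \<longleftrightarrow> (u, v) \<in> E)) \<and>
        (\<forall>u\<in>V. (\<Sum>v\<in>V. A u v) = 1) \<and>
        (\<forall>v\<in>V. (\<Sum>u\<in>V. A u v) = 1))"

definition cycle_edges :: "'a list \<Rightarrow> ('a \<times> 'a) set" where
  "cycle_edges vs = set (zip vs (tl vs @ [hd vs]))"

text \<open>A list of distinct vertices forming a cycle of G (self-loops = length 1).\<close>
definition is_cycle :: "'a set \<Rightarrow> ('a \<times> 'a) set \<Rightarrow> 'a list \<Rightarrow> bool" where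
  "is_cycle V E vs \<longleftrightarrow> vs \<noteq> [] \<and> distinct vs \<and> set vs \<subseteq> V \<and> cycle_edges vs \<subseteq> E"

text \<open>The set C(G): a single edgeless vertex, a cycle, or a union of pairwise
vertex-disjoint cycles (a single cycle is the case of a one-element family).\<close>
definition cycle_subgraphs :: "'a set \<Rightarrow> ('a \<times> 'a) set \<Rightarrow> ('a set \<times> ('a \<times> 'a) set) set" where
  "cycle_subgraphs V E =
     {({v}, {}) | v. v \<in> V} \<union>
     {(\<Union>c\<in>set cs. set c, \<Union>c\<in>set cs. cycle_edges c) | cs.
        cs \<noteq> [] \<and> (\<forall>c\<in>set cs. is_cycle V E c) \<and>
        (\<forall>i<length cs. \<forall>j<length cs. i \<noteq> j \<longrightarrow> set (cs ! i) \<inter> set (cs ! j) = {})}"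

definition generates :: "'a set \<Rightarrow> ('a \<times> 'a) set \<Rightarrow> ('a set \<times> ('a \<times> 'a) set) set \<Rightarrow> bool" where
  "generates V E S \<longleftrightarrow> (\<Union>(fst ` S) = V) \<and> (\<Union>(snd ` S) = E)"

definition ds :: "'a set \<Rightarrow> ('a \<times> 'a) set \<Rightarrow> nat" where
  "ds V E = (LEAST n. \<exists>S. S \<subseteq> cycle_subgraphs V E \<and> finite S \<and> card S = n \<and>
                          generates V E S \<and> (\<forall>H\<in>S. fst H = V))"

end

theory Submission
  imports Defs "HOL-Combinatorics.Cycles"
begin

text \<open>In a union of vertex-disjoint cycles every vertex has at most one successor and one
predecessor, so distinct out-neighbours (in-neighbours) of a vertex lie in distinct members of a
generating family; this gives the lower bound. For the upper bound, the pattern of a doubly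
stochastic matrix satisfies Hall's condition even after one edge (u, v) is prescribed, so every
edge lies on a permutation whose graph is contained in E. Such a graph is a spanning union of
disjoint cycles with |V| edges, and one of them together with one further such graph for each of
the remaining |E| - |V| edges generates G.\<close>

section \<open>Hall's marriage theorem\<close>

lemma hall_condition_Diff_tight:
  fixes N :: "'i \<Rightarrow> 'b set"
  assumes "finite I" "\<forall>i\<in>I. finite (N i)" "\<forall>X\<subseteq>I. card X \<le> card (\<Union>(N ` X))"
    and "X \<subseteq> I" "card (\<Union>(N ` X)) = card X"
  shows "\<forall>Y\<subseteq>I - X. card Y \<le> card (\<Union>i\<in>Y. N i - \<Union>(N ` X))"
proof (intro allI impI)
  fix Y assume Y: "Y \<subseteq> I - X"
  let ?U = "\<Union>(N ` X)"
  have fin: "finite X" "finite Y" using assms(1,4) Y by (auto intro: finite_subset)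
  have finU: "finite ?U" "finite (\<Union>i\<in>Y. N i - ?U)" using fin assms(2,4) Y by blast+
  have "Y \<inter> X = {}" using Y by blast
  then have "card Y + card X = card (Y \<union> X)" using fin by (simp add: card_Un_disjoint)
  also have "\<dots> \<le> card (\<Union>(N ` (Y \<union> X)))" using Y assms(3,4) by (metis Diff_subset le_sup_iff order_trans)
  also have "\<Union>(N ` (Y \<union> X)) = (\<Union>i\<in>Y. N i - ?U) \<union> ?U" by auto
  also have "card \<dots> = card (\<Union>i\<in>Y. N i - ?U) + card ?U"
    using finU by (intro card_Un_disjoint) auto
  finally show "card Y \<le> card (\<Union>i\<in>Y. N i - ?U)" using assms(5) by simp
qed

lemma hall_condition_Diff_singleton:
  fixes N :: "'i \<Rightarrow> 'b set"
  assumes "finite I" "\<forall>i\<in>I. finite (N i)" "\<forall>X\<subseteq>I. card X \<le> card (\<Union>(N ` X))"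
    and no_tight: "\<not> (\<exists>X\<subseteq>I. X \<noteq> {} \<and> X \<noteq> I \<and> card (\<Union>(N ` X)) = card X)"
    and "i \<in> I"
  shows "\<forall>Y\<subseteq>I - {i}. card Y \<le> card (\<Union>j\<in>Y. N j - {y})"
proof (intro allI impI)
  fix Y assume Y: "Y \<subseteq> I - {i}"
  show "card Y \<le> card (\<Union>j\<in>Y. N j - {y})"
  proof (cases "Y = {}")
    case False
    have "finite (\<Union>(N ` Y))" using Y assms(1,2) by (auto intro: finite_subset)
    moreover have "card Y \<le> card (\<Union>(N ` Y))" using assms(3) Y by blast
    moreover have "card (\<Union>(N ` Y)) \<noteq> card Y" using no_tight Y False \<open>i \<in> I\<close> by blast
    moreover have "(\<Union>j\<in>Y. N j - {y}) = \<Union>(N ` Y) - {y}" by auto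
    ultimately show ?thesis using card_Diff_singleton_if[of "\<Union>(N ` Y)" y] by auto
  qed simp
qed

theorem hall_marriage:
  fixes N :: "'i \<Rightarrow> 'b set"
  assumes "finite I" "\<forall>i\<in>I. finite (N i)" "\<forall>X\<subseteq>I. card X \<le> card (\<Union>(N ` X))"
  shows "\<exists>f. inj_on f I \<and> (\<forall>i\<in>I. f i \<in> N i)"
  using assms
proof (induction "card I" arbitrary: I N rule: less_induct)
  case less
  note fin = less.prems(1,2) and hall = less.prems(3)
  show ?case
  proof (cases "\<exists>X\<subseteq>I. X \<noteq> {} \<and> X \<noteq> I \<and> card (\<Union>(N ` X)) = card X")
    case True
    then obtain X where X: "X \<subseteq> I" "X \<noteq> {}" "X \<noteq> I" "card (\<Union>(N ` X)) = card X" by blast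
    let ?U = "\<Union>(N ` X)"
    have card_lt: "card X < card I" "card (I - X) < card I"
      using X fin(1) by (auto intro: psubset_card_mono)
    have "finite X" "\<forall>i\<in>X. finite (N i)" "\<forall>Z\<subseteq>X. card Z \<le> card (\<Union>(N ` Z))"
      using finite_subset[OF X(1) fin(1)] X(1) fin(2) hall by auto
    from less.hyps[OF card_lt(1) this] obtain f1 where f1: "inj_on f1 X" "\<forall>i\<in>X. f1 i \<in> N i"
      by blast
    have "finite (I - X)" "\<forall>i\<in>I - X. finite (N i - ?U)" using fin by auto
    from less.hyps[OF card_lt(2) this hall_condition_Diff_tight[OF fin hall X(1,4)]]
    obtain f2 where f2: "inj_on f2 (I - X)" "\<forall>i\<in>I - X. f2 i \<in> N i - ?U"
      by blast
    define f where "f i = (if i \<in> X then f1 i else f2 i)" for i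
    have "f ` X \<subseteq> ?U" "f ` (I - X) \<inter> ?U = {}" using f1(2) f2(2) by (auto simp: f_def)
    moreover have "inj_on f X" "inj_on f (I - X)" using f1(1) f2(1) by (auto simp: f_def inj_on_def)
    ultimately have "inj_on f (X \<union> (I - X))" by (intro inj_on_Un[THEN iffD2]) blast
    then show ?thesis using f1(2) f2(2) X(1) by (intro exI[of _ f]) (auto simp: f_def Un_absorb1)
  next
    case no_tight: False
    show ?thesis
    proof (cases "I = {}")
      case False
      then obtain i where i: "i \<in> I" by blast
      have "N i \<noteq> {}" using hall[rule_format, of "{i}"] i by auto
      then obtain y where y: "y \<in> N i" unfolding ex_in_conv[symmetric] ..
      have "card (I - {i}) < card I" "finite (I - {i})" "\<forall>j\<in>I - {i}. finite (N j - {y})"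
        using i fin card_Diff1_less[OF fin(1) i] by auto
      from less.hyps[OF this hall_condition_Diff_singleton[OF fin hall no_tight i]]
      obtain f where f: "inj_on f (I - {i})" "\<forall>j\<in>I - {i}. f j \<in> N j - {y}"
        by blast
      have "inj_on (f(i := y)) (insert i (I - {i}))"
        using f by (auto simp: inj_on_def)
      then show ?thesis using f y i by (intro exI[of _ "f(i := y)"]) (auto simp: insert_absorb)
    qed simp
  qed
qed

section \<open>Permutations inside a doubly stochastic pattern\<close>

definition fun_graph :: "'a set \<Rightarrow> ('a \<Rightarrow> 'b) \<Rightarrow> ('a \<times> 'b) set" where
  "fun_graph A f = (\<lambda>x. (x, f x)) ` A"

lemma mem_fun_graph_iff [simp]: "(a, b) \<in> fun_graph A f \<longleftrightarrow> a \<in> A \<and> b = f a"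
  by (auto simp: fun_graph_def)

lemma card_fun_graph: "card (fun_graph A f) = card A"
  unfolding fun_graph_def by (rule card_image) (simp add: inj_on_def)

lemma fun_graph_cong: "(\<And>x. x \<in> A \<Longrightarrow> f x = g x) \<Longrightarrow> fun_graph A f = fun_graph A g"
  by (auto simp: fun_graph_def)

lemma permutes_restrict_inj_on:
  assumes "finite V" "inj_on f V" "f ` V \<subseteq> V"
  shows "(\<lambda>x. if x \<in> V then f x else x) permutes V"
proof (rule bij_imp_permutes)
  have "f ` V = V" using endo_inj_surj assms by blast
  then show "bij_betw (\<lambda>x. if x \<in> V then f x else x) V V"
    using assms(2) by (auto simp: bij_betw_def inj_on_def)
qed simp

definition doubly_stochastic_on :: "'a set \<Rightarrow> ('a \<Rightarrow> 'a \<Rightarrow> real) \<Rightarrow> bool" where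
  "doubly_stochastic_on V A \<longleftrightarrow> (\<forall>u\<in>V. \<forall>v\<in>V. A u v \<ge> 0) \<and>
     (\<forall>u\<in>V. (\<Sum>v\<in>V. A u v) = 1) \<and> (\<forall>v\<in>V. (\<Sum>u\<in>V. A u v) = 1)"

lemma doubly_stochasticableE:
  assumes "doubly_stochasticable V E"
  obtains A where "doubly_stochastic_on V A" "\<forall>u\<in>V. \<forall>v\<in>V. A u v > 0 \<longleftrightarrow> (u, v) \<in> E"
  using assms unfolding doubly_stochasticable_def doubly_stochastic_on_def by blast

lemma doubly_stochastic_rows_card_le:
  assumes "finite V" "doubly_stochastic_on V A" "u \<in> V" "X \<subseteq> V - {u}" "Y \<subseteq> V"
    and zero_outside: "\<forall>x\<in>X. \<forall>w\<in>V - Y. A x w = 0"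
  shows "real (card X) + (\<Sum>w\<in>Y. A u w) \<le> real (card Y)"
proof -
  note A = assms(2)[unfolded doubly_stochastic_on_def]
  have "real (card X) = (\<Sum>x\<in>X. 1)" by simp
  also have "\<dots> = (\<Sum>x\<in>X. \<Sum>w\<in>V. A x w)" using A assms(4) by (intro sum.cong) auto
  also have "\<dots> = (\<Sum>x\<in>X. \<Sum>w\<in>Y. A x w)"
    using assms(1,5) zero_outside by (intro sum.cong refl sum.mono_neutral_right) auto
  also have "\<dots> = (\<Sum>w\<in>Y. \<Sum>x\<in>X. A x w)" by (rule sum.swap)
  also have "\<dots> \<le> (\<Sum>w\<in>Y. \<Sum>x\<in>V - {u}. A x w)"
    using assms(1,4,5) A by (intro sum_mono sum_mono2) auto
  also have "\<dots> = (\<Sum>w\<in>Y. 1 - A u w)"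
    using assms(1,3,5) A by (intro sum.cong refl) (auto simp: sum_diff1)
  also have "\<dots> = real (card Y) - (\<Sum>w\<in>Y. A u w)" by (simp add: sum_subtractf)
  finally show ?thesis by simp
qed

lemma doubly_stochasticable_hall_condition:
  assumes "digraph V E" "doubly_stochasticable V E" "(u, v) \<in> E" "X \<subseteq> V - {u}"
  shows "card X \<le> card ((\<Union>x\<in>X. {w \<in> V. (x, w) \<in> E}) - {v})"
proof -
  obtain A where A: "doubly_stochastic_on V A" "\<forall>u\<in>V. \<forall>v\<in>V. A u v > 0 \<longleftrightarrow> (u, v) \<in> E"
    using assms(2) by (rule doubly_stochasticableE)
  have fin: "finite V" and uv: "u \<in> V" "v \<in> V" using assms(1,3) by (auto simp: digraph_def)
  define Y where "Y = (\<Union>x\<in>X. {w \<in> V. (x, w) \<in> E})"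
  have "Y \<subseteq> V" by (auto simp: Y_def)
  then have "finite Y" using fin by (rule finite_subset)
  have "\<forall>x\<in>X. \<forall>w\<in>V - Y. A x w = 0"
  proof (intro ballI)
    fix x w assume "x \<in> X" "w \<in> V - Y"
    then have "x \<in> V" "w \<in> V" "(x, w) \<notin> E" using assms(4) by (auto simp: Y_def)
    then show "A x w = 0" using A by (force simp: doubly_stochastic_on_def)
  qed
  with fin A(1) uv(1) assms(4) \<open>Y \<subseteq> V\<close>
  have card_le: "real (card X) + (\<Sum>w\<in>Y. A u w) \<le> real (card Y)"
    by (rule doubly_stochastic_rows_card_le)
  have nonneg: "\<forall>w\<in>Y. A u w \<ge> 0" using A(1) uv(1) \<open>Y \<subseteq> V\<close> by (auto simp: doubly_stochastic_on_def)
  show ?thesis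
  proof (cases "v \<in> Y")
    case True
    have "A u v \<le> (\<Sum>w\<in>Y. A u w)" using True nonneg \<open>finite Y\<close> by (intro member_le_sum) auto
    moreover have "A u v > 0" using A(2) uv assms(3) by blast
    ultimately have "card X < card Y" using card_le by linarith
    then show ?thesis using True \<open>finite Y\<close> by (simp add: Y_def[symmetric])
  next
    case False
    have "(\<Sum>w\<in>Y. A u w) \<ge> 0" using nonneg by (simp add: sum_nonneg)
    then have "card X \<le> card Y" using card_le by linarith
    then show ?thesis using False by (simp add: Y_def[symmetric])
  qed
qed

lemma doubly_stochasticable_edge_in_permutation:
  assumes "digraph V E" "doubly_stochasticable V E" "(u, v) \<in> E"
  obtains p where "p permutes V" "p u = v" "fun_graph V p \<subseteq> E"
proof -
  have fin: "finite V" and EV: "E \<subseteq> V \<times> V" using assms(1) by (auto simp: digraph_def)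
  have uv: "u \<in> V" "v \<in> V" using assms(3) EV by auto
  define N where "N x = {w \<in> V. (x, w) \<in> E} - {v}" for x
  have "\<forall>X\<subseteq>V - {u}. card X \<le> card (\<Union>(N ` X))"
    using doubly_stochasticable_hall_condition[OF assms] by (simp add: N_def UN_extend_simps(4)[symmetric])
  then obtain f where f: "inj_on f (V - {u})" "\<forall>x\<in>V - {u}. f x \<in> N x"
    using hall_marriage[of "V - {u}" N] fin by (auto simp: N_def)
  define g where "g = f(u := v)"
  have "inj_on g (insert u (V - {u}))" using f by (auto simp: g_def N_def inj_on_def)
  then have "inj_on g V" using uv by (simp add: insert_absorb)
  moreover have "g ` V \<subseteq> V" using f uv by (auto simp: g_def N_def)
  ultimately have "(\<lambda>x. if x \<in> V then g x else x) permutes V"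
    using permutes_restrict_inj_on[OF fin] by blast
  moreover have "fun_graph V (\<lambda>x. if x \<in> V then g x else x) \<subseteq> E"
    using f assms(3) by (auto simp: g_def N_def)
  ultimately show ?thesis using uv by (intro that) (auto simp: g_def)
qed

section \<open>Permutations as unions of disjoint cycles\<close>

lemma cycle_edges_eq_fun_graph:
  assumes "distinct c"
  shows "cycle_edges c = fun_graph (set c) (cycle_of_list c)"
proof (cases "c = []")
  case False
  have "tl c @ [hd c] = map (cycle_of_list c) c"
    using cyclic_rotation[OF assms, of 1] False by (simp add: rotate1_hd_tl)
  then show ?thesis
    by (simp add: cycle_edges_def fun_graph_def zip_map2 zip_same_conv_map image_image)
qed (simp add: cycle_edges_def fun_graph_def)

lemma cycle_edges_support:
  assumes "permutation p"
  shows "cycle_edges (support p a) = fun_graph (set (support p a)) p"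
  using cycle_edges_eq_fun_graph[OF cycle_of_permutation[OF assms]] cycle_restrict[OF assms]
  by (auto intro: fun_graph_cong)

lemma permutes_cycle_lists:
  assumes "finite S" "p permutes S"
  shows "\<exists>cs. set (concat cs) = S \<and> distinct (concat cs) \<and>
              (\<forall>c\<in>set cs. c \<noteq> [] \<and> cycle_edges c = fun_graph (set c) p)"
  using assms
proof (induction "card S" arbitrary: S p rule: less_induct)
  case less
  show ?case
  proof (cases "S = {}")
    case False
    then obtain a where a: "a \<in> S" by blast
    have perm: "permutation p" using less.prems permutation_permutes by blast
    define c where "c = support p a"
    have c_sub: "set c \<subseteq> S"
      using permutes_in_image[OF permutes_funpow[OF less.prems(2)]] a by (auto simp: c_def)
    have "a \<in> set c" using least_power_of_permutation(2)[OF perm] by (force simp: c_def)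
    define q where "q y = (if y \<in> S - set c then p y else y)" for y
    have "q permutes S - set c"
      unfolding q_def c_def by (rule semidecomposition[OF less.prems(2,1)])
    moreover have "card (S - set c) < card S"
      using \<open>a \<in> set c\<close> a less.prems(1) by (intro psubset_card_mono) auto
    ultimately obtain cs where cs: "set (concat cs) = S - set c" "distinct (concat cs)"
      "\<forall>c'\<in>set cs. c' \<noteq> [] \<and> cycle_edges c' = fun_graph (set c') q"
      using less.hyps less.prems(1) by blast
    have "\<forall>c'\<in>set cs. cycle_edges c' = fun_graph (set c') p"
    proof
      fix c' assume c': "c' \<in> set cs"
      have "set c' \<subseteq> S - set c" using c' cs(1) by auto
      then have "fun_graph (set c') q = fun_graph (set c') p"
        by (intro fun_graph_cong) (auto simp: q_def)
      then show "cycle_edges c' = fun_graph (set c') p" using c' cs(3) by simp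
    qed
    moreover have "distinct c" "c \<noteq> []" "cycle_edges c = fun_graph (set c) p"
      using cycle_of_permutation[OF perm] \<open>a \<in> set c\<close> cycle_edges_support[OF perm]
      by (auto simp: c_def)
    ultimately show ?thesis using cs c_sub by (intro exI[of _ "c # cs"]) auto
  qed (intro exI[of _ "[]"], simp)
qed

lemma distinct_concat_iff_nth_disjoint:
  assumes "[] \<notin> set cs"
  shows "distinct (concat cs) \<longleftrightarrow> (\<forall>c\<in>set cs. distinct c) \<and>
           (\<forall>i<length cs. \<forall>j<length cs. i \<noteq> j \<longrightarrow> set (cs ! i) \<inter> set (cs ! j) = {})"
proof -
  have lists_iff_indices: "distinct cs \<and>
        (\<forall>c d. c \<in> set cs \<and> d \<in> set cs \<and> c \<noteq> d \<longrightarrow> set c \<inter> set d = {}) \<longleftrightarrow>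
        (\<forall>i<length cs. \<forall>j<length cs. i \<noteq> j \<longrightarrow> set (cs ! i) \<inter> set (cs ! j) = {})"
    (is "?lists \<longleftrightarrow> ?indices")
  proof
    assume ?lists
    then show ?indices by (metis nth_eq_iff_index_eq nth_mem)
  next
    assume disj: ?indices
    have "cs ! i \<noteq> []" if "i < length cs" for i using assms that nth_mem by fastforce
    then have "distinct cs" using disj unfolding distinct_conv_nth by (metis inf.idem set_empty)
    moreover have "set c \<inter> set d = {}" if "c \<in> set cs" "d \<in> set cs" "c \<noteq> d" for c d
      using that disj by (auto simp: in_set_conv_nth)
    ultimately show ?lists by blast
  qed
  have "removeAll [] cs = cs" using assms by (simp add: removeAll_id)
  then show ?thesis unfolding distinct_concat_iff using lists_iff_indices by simp blast
qed

lemma cycle_lists_in_cycle_subgraphs: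
  assumes "cs \<noteq> []" "distinct (concat cs)"
    and "\<forall>c\<in>set cs. c \<noteq> [] \<and> set c \<subseteq> V \<and> cycle_edges c \<subseteq> E"
  shows "(\<Union>c\<in>set cs. set c, \<Union>c\<in>set cs. cycle_edges c) \<in> cycle_subgraphs V E"
proof -
  have "[] \<notin> set cs" using assms(3) by auto
  then have "(\<forall>c\<in>set cs. distinct c) \<and>
      (\<forall>i<length cs. \<forall>j<length cs. i \<noteq> j \<longrightarrow> set (cs ! i) \<inter> set (cs ! j) = {})"
    using assms(2) distinct_concat_iff_nth_disjoint by blast
  then have "(\<forall>c\<in>set cs. is_cycle V E c) \<and>
      (\<forall>i<length cs. \<forall>j<length cs. i \<noteq> j \<longrightarrow> set (cs ! i) \<inter> set (cs ! j) = {})"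
    using assms(3) by (simp add: is_cycle_def)
  then show ?thesis using assms(1) unfolding cycle_subgraphs_def by blast
qed

lemma permutes_fun_graph_in_cycle_subgraphs:
  assumes "finite V" "V \<noteq> {}" "p permutes V" "fun_graph V p \<subseteq> E"
  shows "(V, fun_graph V p) \<in> cycle_subgraphs V E"
proof -
  obtain cs where cs: "set (concat cs) = V" "distinct (concat cs)"
    "\<forall>c\<in>set cs. c \<noteq> [] \<and> cycle_edges c = fun_graph (set c) p"
    using permutes_cycle_lists[OF assms(1,3)] by blast
  have V: "(\<Union>c\<in>set cs. set c) = V" using cs(1) by simp
  then have "(\<Union>c\<in>set cs. cycle_edges c) = fun_graph V p"
    using cs(3) by (auto simp: fun_graph_def)
  moreover have "\<forall>c\<in>set cs. c \<noteq> [] \<and> set c \<subseteq> V \<and> cycle_edges c \<subseteq> E"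
    using cs(3) V assms(4) by (auto simp: fun_graph_def)
  moreover have "cs \<noteq> []" using cs(1) assms(2) by auto
  ultimately show ?thesis using cycle_lists_in_cycle_subgraphs[OF _ cs(2)] V by metis
qed

lemma cycle_subgraphs_edges_in_cycle:
  assumes "H \<in> cycle_subgraphs V E" "(a, b) \<in> snd H" "(a', b') \<in> snd H" "a = a' \<or> b = b'"
  obtains c where "distinct c" "(a, b) \<in> cycle_edges c" "(a', b') \<in> cycle_edges c"
proof -
  obtain cs where H: "snd H = (\<Union>c\<in>set cs. cycle_edges c)" "\<forall>c\<in>set cs. is_cycle V E c"
    "\<forall>i<length cs. \<forall>j<length cs. i \<noteq> j \<longrightarrow> set (cs ! i) \<inter> set (cs ! j) = {}"
    using assms(1,2) unfolding cycle_subgraphs_def by auto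
  then have "distinct (concat cs)"
    using distinct_concat_iff_nth_disjoint[of cs] by (auto simp: is_cycle_def)
  then have disj: "\<forall>c\<in>set cs. \<forall>d\<in>set cs. c \<noteq> d \<longrightarrow> set c \<inter> set d = {}"
    by (simp add: distinct_concat_iff)
  obtain c d where cd: "c \<in> set cs" "d \<in> set cs" "(a, b) \<in> cycle_edges c" "(a', b') \<in> cycle_edges d"
    using assms(2,3) H(1) by auto
  have "distinct c" "distinct d" using cd H(2) by (auto simp: is_cycle_def)
  then have "a \<in> set c" "b \<in> set c" "a' \<in> set d" "b' \<in> set d"
    using cd(3,4) cycle_edges_eq_fun_graph permutes_in_image[OF cycle_permutes] by fastforce+
  then have "c = d" using disj cd(1,2) assms(4) by blast
  then show ?thesis using that \<open>distinct c\<close> cd by blast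
qed

lemma cycle_subgraphs_out_unique:
  assumes "H \<in> cycle_subgraphs V E" "(a, b) \<in> snd H" "(a, b') \<in> snd H"
  shows "b = b'"
proof -
  obtain c where "distinct c" "(a, b) \<in> cycle_edges c" "(a, b') \<in> cycle_edges c"
    using cycle_subgraphs_edges_in_cycle[OF assms] by blast
  then show ?thesis by (simp add: cycle_edges_eq_fun_graph)
qed

lemma cycle_subgraphs_in_unique:
  assumes "H \<in> cycle_subgraphs V E" "(a, b) \<in> snd H" "(a', b) \<in> snd H"
  shows "a = a'"
proof -
  obtain c where "distinct c" "(a, b) \<in> cycle_edges c" "(a', b) \<in> cycle_edges c"
    using cycle_subgraphs_edges_in_cycle[OF assms] by blast
  moreover have "inj (cycle_of_list c)"
    using permutation_of_cycle by (rule permutation_bijective[THEN bij_is_inj])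
  ultimately show ?thesis by (auto simp: cycle_edges_eq_fun_graph dest: injD)
qed

section \<open>Bounds on the DS-character\<close>

definition spanning_cycle_cover ::
    "'a set \<Rightarrow> ('a \<times> 'a) set \<Rightarrow> ('a set \<times> ('a \<times> 'a) set) set \<Rightarrow> bool" where
  "spanning_cycle_cover V E S \<longleftrightarrow>
     S \<subseteq> cycle_subgraphs V E \<and> finite S \<and> generates V E S \<and> (\<forall>H\<in>S. fst H = V)"

lemma ds_le_card:
  assumes "spanning_cycle_cover V E S"
  shows "ds V E \<le> card S"
  using assms unfolding ds_def spanning_cycle_cover_def by (blast intro: Least_le)

lemma ds_attained:
  assumes "spanning_cycle_cover V E S"
  obtains T where "spanning_cycle_cover V E T" "card T = ds V E"
proof -
  let ?P = "\<lambda>n. \<exists>S. S \<subseteq> cycle_subgraphs V E \<and> finite S \<and> card S = n \<and>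
                    generates V E S \<and> (\<forall>H\<in>S. fst H = V)"
  have "?P (card S)" using assms unfolding spanning_cycle_cover_def by blast
  then have "?P (ds V E)" unfolding ds_def by (rule LeastI)
  then show ?thesis using that unfolding spanning_cycle_cover_def by blast
qed

lemma d_out_le_card_if_generates:
  assumes "S \<subseteq> cycle_subgraphs V E" "finite S" "generates V E S"
  shows "d_out V E v \<le> card S"
  unfolding d_out_def
proof (rule card_le_if_inj_on_rel[where r = "\<lambda>w H. (v, w) \<in> snd H"])
  show "\<exists>H. H \<in> S \<and> (v, w) \<in> snd H" if "w \<in> {w \<in> V. (v, w) \<in> E}" for w
    using that assms(3) unfolding generates_def by blast
next
  fix a b H assume "H \<in> S" "(v, a) \<in> snd H" "(v, b) \<in> snd H"
  with assms(1) show "a = b" by (blast intro: cycle_subgraphs_out_unique)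
qed fact

lemma d_in_le_card_if_generates:
  assumes "S \<subseteq> cycle_subgraphs V E" "finite S" "generates V E S"
  shows "d_in V E v \<le> card S"
  unfolding d_in_def
proof (rule card_le_if_inj_on_rel[where r = "\<lambda>w H. (w, v) \<in> snd H"])
  show "\<exists>H. H \<in> S \<and> (w, v) \<in> snd H" if "w \<in> {w \<in> V. (w, v) \<in> E}" for w
    using that assms(3) unfolding generates_def by blast
next
  fix a b H assume "H \<in> S" "(a, v) \<in> snd H" "(b, v) \<in> snd H"
  with assms(1) show "a = b" by (blast intro: cycle_subgraphs_in_unique)
qed fact

lemma subcover_card_le:
  assumes "finite E" "\<F> \<noteq> {}" "\<forall>F\<in>\<F>. F \<subseteq> E \<and> card F = n" "E \<subseteq> \<Union>\<F>"
  shows "\<exists>\<G>\<subseteq>\<F>. finite \<G> \<and> \<Union>\<G> = E \<and> card \<G> + n \<le> card E + 1"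
proof -
  obtain F0 where F0: "F0 \<in> \<F>" using assms(2) by blast
  define pick where "pick e = (SOME F. F \<in> \<F> \<and> e \<in> F)" for e
  have pick: "pick e \<in> \<F> \<and> e \<in> pick e" if "e \<in> E" for e
  proof -
    have "\<exists>F. F \<in> \<F> \<and> e \<in> F" using that assms(4) by blast
    then show ?thesis unfolding pick_def by (rule someI_ex)
  qed
  define \<G> where "\<G> = insert F0 (pick ` (E - F0))"
  have "\<G> \<subseteq> \<F>" "finite \<G>" using F0 pick assms(1) by (auto simp: \<G>_def)
  moreover have "\<Union>\<G> = E"
  proof
    show "\<Union>\<G> \<subseteq> E" using \<open>\<G> \<subseteq> \<F>\<close> assms(3) by blast
    show "E \<subseteq> \<Union>\<G>" using pick by (auto simp: \<G>_def)
  qed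
  moreover have "card \<G> \<le> Suc (card (pick ` (E - F0)))"
    unfolding \<G>_def using assms(1) by (simp add: card_insert_if)
  moreover have "card (pick ` (E - F0)) \<le> card (E - F0)" using assms(1) by (simp add: card_image_le)
  moreover have "F0 \<subseteq> E" "card F0 = n" using F0 assms(3) by auto
  then have "card (E - F0) = card E - n" "n \<le> card E"
    using assms(1) by (auto simp: card_Diff_subset finite_subset card_mono)
  ultimately show ?thesis by (intro exI[of _ \<G>]) auto
qed

lemma doubly_stochasticable_out_edge:
  assumes "doubly_stochasticable V E" "v \<in> V"
  obtains w where "(v, w) \<in> E"
proof -
  obtain A where A: "doubly_stochastic_on V A" "\<forall>u\<in>V. \<forall>w\<in>V. A u w > 0 \<longleftrightarrow> (u, w) \<in> E"
    using assms(1) by (rule doubly_stochasticableE)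
  have "(\<Sum>w\<in>V. A v w) \<noteq> 0" using A(1) assms(2) by (simp add: doubly_stochastic_on_def)
  then obtain w where "w \<in> V" "A v w \<noteq> 0" by (meson sum.neutral)
  then have "A v w > 0" using A(1) assms(2) by (simp add: doubly_stochastic_on_def order_less_le)
  then show ?thesis using A(2) assms(2) \<open>w \<in> V\<close> that by blast
qed

lemma spanning_cycle_cover_card_le:
  assumes "digraph V E" "V \<noteq> {}" "doubly_stochasticable V E"
  shows "\<exists>S. spanning_cycle_cover V E S \<and> card S + card V \<le> card E + 1"
proof -
  have fin: "finite V" "finite E" using assms(1) by (auto simp: digraph_def intro: finite_subset)
  define \<F> where "\<F> = {fun_graph V p | p. p permutes V \<and> fun_graph V p \<subseteq> E}"
  have cover: "E \<subseteq> \<Union>\<F>"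
  proof
    fix e assume "e \<in> E"
    moreover obtain a b where e: "e = (a, b)" by (cases e)
    ultimately obtain p where p: "p permutes V" "p a = b" "fun_graph V p \<subseteq> E"
      using doubly_stochasticable_edge_in_permutation[OF assms(1,3)] by blast
    have "a \<in> V" using \<open>e \<in> E\<close> e assms(1) by (auto simp: digraph_def)
    then have "e \<in> fun_graph V p" using e p(2) by simp
    moreover have "fun_graph V p \<in> \<F>" using p(1,3) by (auto simp: \<F>_def)
    ultimately show "e \<in> \<Union>\<F>" by blast
  qed
  obtain v where "v \<in> V" using assms(2) by blast
  with assms(3) obtain w where "(v, w) \<in> E" by (rule doubly_stochasticable_out_edge)
  then have "E \<noteq> {}" by blast
  then have "\<F> \<noteq> {}" using cover by blast
  moreover have "\<forall>F\<in>\<F>. F \<subseteq> E \<and> card F = card V" by (auto simp: \<F>_def card_fun_graph)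
  ultimately obtain \<G> where \<G>: "\<G> \<subseteq> \<F>" "finite \<G>" "\<Union>\<G> = E" "card \<G> + card V \<le> card E + 1"
    using subcover_card_le[OF fin(2) _ _ cover] by meson
  define S where "S = Pair V ` \<G>"
  have "S \<subseteq> cycle_subgraphs V E"
    using \<G>(1) permutes_fun_graph_in_cycle_subgraphs[OF fin(1) assms(2)] by (auto simp: S_def \<F>_def)
  moreover have "\<G> \<noteq> {}" using \<G>(3) \<open>E \<noteq> {}\<close> by auto
  then have "generates V E S" using \<G>(3) by (auto simp: S_def generates_def image_image)
  moreover have "card S = card \<G>" unfolding S_def by (rule card_image) (simp add: inj_on_def)
  ultimately show ?thesis using \<G>(2,4) by (intro exI[of _ S]) (auto simp: spanning_cycle_cover_def S_def)
qed

theorem lemma3p14: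
  fixes V :: "'a set" and E :: "('a \<times> 'a) set"
  assumes "digraph V E" and "V \<noteq> {}"
    and "doubly_stochasticable V E" and "strongly_connected V E"
  shows "max (Max (d_out V E ` V)) (Max (d_in V E ` V)) \<le> ds V E
         \<and> int (ds V E) \<le> int (card E) - int (card V) + 1"
proof -
  obtain S where S: "spanning_cycle_cover V E S" "card S + card V \<le> card E + 1"
    using spanning_cycle_cover_card_le[OF assms(1-3)] by blast
  obtain T where T: "spanning_cycle_cover V E T" "card T = ds V E"
    using S(1) by (rule ds_attained)
  then have "T \<subseteq> cycle_subgraphs V E" "finite T" "generates V E T"
    by (simp_all add: spanning_cycle_cover_def)
  then have "d_out V E v \<le> ds V E" "d_in V E v \<le> ds V E" for v
    using d_out_le_card_if_generates d_in_le_card_if_generates T(2) by metis+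
  moreover have "finite V" using assms(1) by (simp add: digraph_def)
  moreover have "ds V E \<le> card S" using S(1) by (rule ds_le_card)
  ultimately show ?thesis using assms(2) S(2) by auto
qed

end
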